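(* Let $A,B$ be $K$-algebras with filtrations $\mathcal{F}=\{V_i\}_{i\ge0}$ and $\mathcal{G}=\{W_i\}_{i\ge0}$ respectively, and equip $A\oplus B$ with the filtration $\mathcal{H}=\{V_i\oplus W_i\}_{i\ge0}$. Then $$\mathrm{h}_{\mathrm{alg}}(A\oplus B,\mathcal{H})=\max\{\mathrm{h}_{\mathrm{alg}}(A,\mathcal{F}),\mathrm{h}_{\mathrm{alg}}(B,\mathcal{G})\}.$$
   Context: A filtration of $A$ is a family $\{V_n\}_{n\ge0}$ of subspaces with $0=V_0\subseteq V_1\subseteq\cdots$, $A=\bigcup_nV_n$, $V_nV_m\subseteq V_{n+m}$, with finite-dimensional quotients. $\mathrm{h}_{\mathrm{alg}}(A,\mathcal{F})=0$ if $A$ is finite-dimensional and otherwise $\limsup_n\frac1n\log\dim(V_n/V_{n-1})$. $A\oplus B$ is the direct product algebra with componentwise operations. *)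

theory Defs
  imports "HOL-Analysis.Analysis" "HOL-Library.Product_Plus"
begin

definition K_algebra :: "('k::field \<Rightarrow> 'a::ab_group_add \<Rightarrow> 'a) \<Rightarrow> ('a \<Rightarrow> 'a \<Rightarrow> 'a) \<Rightarrow> bool" where
  "K_algebra s m \<longleftrightarrow> vector_space s
     \<and> (\<forall>x y z. m (m x y) z = m x (m y z))
     \<and> (\<forall>x y z. m x (y + z) = m x y + m x z \<and> m (x + y) z = m x z + m y z)
     \<and> (\<forall>c x y. m (s c x) y = s c (m x y) \<and> m x (s c y) = s c (m x y))
     \<and> (\<exists>e. \<forall>x. m e x = x \<and> m x e = x)"

text \<open>A filtration: subspaces 0 = V 0 \<subseteq> V 1 \<subseteq> ..., exhausting A, with V n V k \<subseteq> V (n+k),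
and finite-dimensional quotients V n / V (n-1) (i.e. V n is spanned by V (n-1) and finitely
many further vectors).\<close>
definition is_filtration :: "('k::field \<Rightarrow> 'a::ab_group_add \<Rightarrow> 'a) \<Rightarrow> ('a \<Rightarrow> 'a \<Rightarrow> 'a) \<Rightarrow> (nat \<Rightarrow> 'a set) \<Rightarrow> bool" where
  "is_filtration s m V \<longleftrightarrow> V 0 = {0}
     \<and> (\<forall>n. module.subspace s (V n))
     \<and> (\<forall>n. V n \<subseteq> V (Suc n))
     \<and> (\<Union>n. V n) = UNIV
     \<and> (\<forall>n k x y. x \<in> V n \<longrightarrow> y \<in> V k \<longrightarrow> m x y \<in> V (n + k))
     \<and> (\<forall>n. \<exists>B. finite B \<and> V (Suc n) \<subseteq> module.span s (B \<union> V n))"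

definition quot_dim :: "('k::field \<Rightarrow> 'a::ab_group_add \<Rightarrow> 'a) \<Rightarrow> (nat \<Rightarrow> 'a set) \<Rightarrow> nat \<Rightarrow> nat" where
  "quot_dim s V n = vector_space.dim s (V n) - vector_space.dim s (V (n - 1))"

definition fin_dim_space :: "('k::field \<Rightarrow> 'a::ab_group_add \<Rightarrow> 'a) \<Rightarrow> bool" where
  "fin_dim_space s \<longleftrightarrow> (\<exists>B. finite B \<and> module.span s B = UNIV)"

text \<open>Algebraic entropy; log 0 is read as -\<infinity>.\<close>
definition h_alg :: "('k::field \<Rightarrow> 'a::ab_group_add \<Rightarrow> 'a) \<Rightarrow> (nat \<Rightarrow> 'a set) \<Rightarrow> ereal" where
  "h_alg s V = (if fin_dim_space s then 0
     else limsup (\<lambda>n. if quot_dim s V n = 0 then -\<infinity>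
                       else ereal (ln (real (quot_dim s V n)) / real n)))"

definition prod_scale :: "('k \<Rightarrow> 'a \<Rightarrow> 'a) \<Rightarrow> ('k \<Rightarrow> 'b \<Rightarrow> 'b) \<Rightarrow> 'k \<Rightarrow> 'a \<times> 'b \<Rightarrow> 'a \<times> 'b" where
  "prod_scale sA sB c p = (sA c (fst p), sB c (snd p))"

definition prod_mult :: "('a \<Rightarrow> 'a \<Rightarrow> 'a) \<Rightarrow> ('b \<Rightarrow> 'b \<Rightarrow> 'b) \<Rightarrow> 'a \<times> 'b \<Rightarrow> 'a \<times> 'b \<Rightarrow> 'a \<times> 'b" where
  "prod_mult mA mB p q = (mA (fst p) (fst q), mB (snd p) (snd q))"

end

theory Submission
  imports Defs
begin

text \<open>
  Since the subspaces \<open>V n \<times> W n\<close> have dimension \<open>dim (V n) + dim (W n)\<close>, the quotient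
  dimensions of the product filtration are the sums \<open>a n + b n\<close> of those of the factors.
  From \<open>max (a n) (b n) \<le> a n + b n \<le> 2 max (a n) (b n)\<close> and \<open>ln 2 / n \<longrightarrow> 0\<close>, the exponential
  growth rate of \<open>a + b\<close> is the maximum of the growth rates of \<open>a\<close> and \<open>b\<close>.
  The special value \<open>0\<close> for finite-dimensional algebras is absorbed by writing the entropy as
  \<open>max 0\<close> of the growth rate: in finite dimension the quotients eventually vanish, so the rate
  is \<open>-\<infinity>\<close>; in infinite dimension infinitely many quotients are nonzero, so the rate is \<open>\<ge> 0\<close>.
\<close>

lemma Limsup_max:
  fixes f g :: "'a \<Rightarrow> 'b::complete_linorder"
  shows "Limsup F (\<lambda>x. max (f x) (g x)) = max (Limsup F f) (Limsup F g)"
proof (rule antisym)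
  have "eventually (\<lambda>x. max (f x) (g x) < y) F" if "max (Limsup F f) (Limsup F g) < y" for y
  proof -
    have "eventually (\<lambda>x. f x < y) F" "eventually (\<lambda>x. g x < y) F"
      using that by (auto intro: Limsup_lessD)
    then show ?thesis
      by eventually_elim simp
  qed
  then show "Limsup F (\<lambda>x. max (f x) (g x)) \<le> max (Limsup F f) (Limsup F g)"
    by (simp add: Limsup_le_iff)
  show "max (Limsup F f) (Limsup F g) \<le> Limsup F (\<lambda>x. max (f x) (g x))"
    by (auto intro: Limsup_mono)
qed

definition log_growth :: "nat \<Rightarrow> nat \<Rightarrow> ereal" where
  "log_growth n k = (if k = 0 then -\<infinity> else ereal (ln (real k) / real n))"

definition growth_rate :: "(nat \<Rightarrow> nat) \<Rightarrow> ereal" where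
  "growth_rate q = limsup (\<lambda>n. log_growth n (q n))"

lemma h_alg_eq_growth_rate:
  "h_alg s V = (if fin_dim_space s then 0 else growth_rate (quot_dim s V))"
  by (simp add: h_alg_def growth_rate_def log_growth_def)

lemma mono_log_growth: "mono (log_growth n)"
proof (rule monoI)
  fix k l :: nat
  assume "k \<le> l"
  then show "log_growth n k \<le> log_growth n l"
    by (cases "k = 0") (auto simp: log_growth_def intro!: divide_right_mono)
qed

lemma log_growth_add_le: "log_growth n (a + b) \<le> ereal (ln 2 / real n) + log_growth n (max a b)"
proof (cases "max a b = 0")
  case False
  have "ln (real (a + b)) \<le> ln (2 * real (max a b))"
    using False by (subst ln_le_cancel_iff) auto
  also have "\<dots> = ln 2 + ln (real (max a b))"
    using False by (simp add: ln_mult)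
  finally have "ln (real (a + b)) / real n \<le> ln 2 / real n + ln (real (max a b)) / real n"
    unfolding add_divide_distrib [symmetric] by (rule divide_right_mono) simp
  moreover have "a + b \<noteq> 0"
    using False by linarith
  ultimately show ?thesis
    using False unfolding log_growth_def by simp
qed (simp add: log_growth_def)

lemma growth_rate_add: "growth_rate (\<lambda>n. a n + b n) = max (growth_rate a) (growth_rate b)"
proof (rule antisym)
  have vanishing: "(\<lambda>n. ereal (ln 2 / real n)) \<longlonglongrightarrow> 0"
    by (simp add: zero_ereal_def lim_const_over_n)
  have "growth_rate (\<lambda>n. a n + b n)
      \<le> limsup (\<lambda>n. ereal (ln 2 / real n) + log_growth n (max (a n) (b n)))"
    unfolding growth_rate_def by (intro Limsup_mono always_eventually allI log_growth_add_le)
  also have "\<dots> = limsup (\<lambda>n. max (log_growth n (a n)) (log_growth n (b n)))"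
    by (subst ereal_limsup_lim_add [OF vanishing]) (simp_all add: max_of_mono [OF mono_log_growth])
  also have "\<dots> = max (growth_rate a) (growth_rate b)"
    unfolding growth_rate_def by (rule Limsup_max)
  finally show "growth_rate (\<lambda>n. a n + b n) \<le> max (growth_rate a) (growth_rate b)" .
  show "max (growth_rate a) (growth_rate b) \<le> growth_rate (\<lambda>n. a n + b n)"
    unfolding growth_rate_def
    by (intro max.boundedI Limsup_mono always_eventually allI monoD [OF mono_log_growth]) simp_all
qed

lemma growth_rate_nonneg:
  assumes "frequently (\<lambda>n. q n \<noteq> 0) sequentially"
  shows "0 \<le> growth_rate q"
proof (rule ccontr)
  have nonneg: "0 \<le> log_growth n k" if "k \<noteq> 0" for n k
    using that by (auto simp: log_growth_def intro!: divide_nonneg_nonneg ln_ge_zero)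
  assume "\<not> 0 \<le> growth_rate q"
  then have "eventually (\<lambda>n. log_growth n (q n) < 0) sequentially"
    unfolding growth_rate_def by (intro Limsup_lessD) simp
  then have "eventually (\<lambda>n. q n = 0) sequentially"
    by (rule eventually_mono) (metis nonneg not_le)
  with assms show False
    by (simp add: frequently_def)
qed

lemma growth_rate_eq_MInfty:
  assumes "eventually (\<lambda>n. q n = 0) sequentially"
  shows "growth_rate q = -\<infinity>"
  unfolding growth_rate_def
  using assms by (intro antisym Limsup_bounded) (auto elim: eventually_mono simp: log_growth_def)

definition finite_dim :: "('k::field \<Rightarrow> 'a::ab_group_add \<Rightarrow> 'a) \<Rightarrow> 'a set \<Rightarrow> bool" where
  "finite_dim s T \<longleftrightarrow> (\<exists>F. finite F \<and> T \<subseteq> module.span s F)"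

context vector_space
begin

lemma independent_card_le_dim_finite_dim:
  assumes "finite_dim scale T" "independent I" "I \<subseteq> T"
  shows "finite I \<and> card I \<le> dim T"
proof -
  obtain F where F: "finite F" "T \<subseteq> span F"
    using assms(1) finite_dim_def by blast
  obtain B where B: "B \<subseteq> T" "independent B" "T \<subseteq> span B" "card B = dim T"
    by (rule basis_exists)
  have "finite B"
    using independent_span_bound [OF F(1) B(2)] B(1) F(2) by blast
  then show ?thesis
    using independent_span_bound [OF _ assms(2)] assms(3) B by fastforce
qed

lemma dim_mono_finite_dim:
  assumes "finite_dim scale T" "S \<subseteq> T"
  shows "dim S \<le> dim T"
proof -
  obtain B where B: "B \<subseteq> S" "independent B" "S \<subseteq> span B" "card B = dim S"
    by (rule basis_exists)
  have "card B \<le> dim T"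
    using independent_card_le_dim_finite_dim [OF assms(1) B(2)] B(1) assms(2) by blast
  with B(4) show ?thesis
    by simp
qed

lemma subspace_dim_equal_finite_dim:
  assumes "subspace S" "S \<subseteq> T" "finite_dim scale T" "dim T \<le> dim S"
  shows "S = T"
proof (rule ccontr)
  assume "S \<noteq> T"
  then obtain x where x: "x \<in> T" "x \<notin> S"
    using assms(2) by blast
  obtain B where B: "B \<subseteq> S" "independent B" "S \<subseteq> span B" "card B = dim S"
    by (rule basis_exists)
  have "x \<notin> span B"
    using x(2) span_minimal [OF B(1) assms(1)] by blast
  then have "x \<notin> B"
    by (auto intro: span_base)
  have "insert x B \<subseteq> T"
    using x(1) B(1) assms(2) by blast
  then have "finite (insert x B) \<and> card (insert x B) \<le> dim T"
    by (intro independent_card_le_dim_finite_dim [OF assms(3)] independent_insertI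
        \<open>x \<notin> span B\<close> B(2))
  with \<open>x \<notin> B\<close> have "dim S + 1 \<le> dim T"
    by (auto simp: B(4) [symmetric])
  with assms(4) show False
    by simp
qed

lemma fin_dim_space_iff_finite_dim_UNIV: "fin_dim_space scale \<longleftrightarrow> finite_dim scale UNIV"
  by (auto simp: fin_dim_space_def finite_dim_def)

end

context vector_space_prod
begin

lemma span_Times_sing_Un: "p.span (A \<times> {0} \<union> {0} \<times> B) = vs1.span A \<times> vs2.span B"
proof -
  have "(a, b) = (a, 0) + (0, b)" for a :: 'b and b :: 'c
    by simp
  then show ?thesis
    by (fastforce simp: p.span_Un span_Times_sing1 span_Times_sing2)
qed

lemma finite_dim_Times:
  assumes "finite_dim s1 S" "finite_dim s2 T"
  shows "finite_dim scale (S \<times> T)"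
proof -
  obtain F where F: "finite F" "S \<subseteq> vs1.span F"
    using assms(1) by (auto simp: finite_dim_def)
  obtain G where G: "finite G" "T \<subseteq> vs2.span G"
    using assms(2) by (auto simp: finite_dim_def)
  have "S \<times> T \<subseteq> p.span (F \<times> {0} \<union> {0} \<times> G)"
    using F(2) G(2) by (auto simp: span_Times_sing_Un)
  moreover have "finite (F \<times> {0} \<union> {0} \<times> G)"
    using F(1) G(1) by simp
  ultimately show ?thesis
    unfolding finite_dim_def by blast
qed

lemma independent_Times_sing_Un:
  assumes "vs1.independent A" "vs2.independent B"
  shows "p.independent (A \<times> {0} \<union> {0} \<times> B)"
proof -
  have nz: "0 \<notin> A" "0 \<notin> B"
    using assms vs1.dependent_zero vs2.dependent_zero by blast+
  show ?thesis
    unfolding p.dependent_def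
  proof safe
    fix a
    assume a: "a \<in> A"
    assume "(a, 0) \<in> p.span (A \<times> {0} \<union> {0} \<times> B - {(a, 0)})"
    also have "A \<times> {0} \<union> {0} \<times> B - {(a, 0)} = (A - {a}) \<times> {0} \<union> {0} \<times> B"
      using a nz by auto
    finally show False
      using a assms(1) vs1.dependent_def by (auto simp: span_Times_sing_Un)
  next
    fix b
    assume b: "b \<in> B"
    assume "(0, b) \<in> p.span (A \<times> {0} \<union> {0} \<times> B - {(0, b)})"
    also have "A \<times> {0} \<union> {0} \<times> B - {(0, b)} = A \<times> {0} \<union> {0} \<times> (B - {b})"
      using b nz by auto
    finally show False
      using b assms(2) vs2.dependent_def by (auto simp: span_Times_sing_Un)
  qed
qed

lemma dim_Times_finite_dim:
  assumes S: "vs1.subspace S" "finite_dim s1 S" and T: "vs2.subspace T" "finite_dim s2 T"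
  shows "p.dim (S \<times> T) = vs1.dim S + vs2.dim T"
proof -
  obtain BS where BS: "BS \<subseteq> S" "vs1.independent BS" "S \<subseteq> vs1.span BS" "card BS = vs1.dim S"
    by (rule vs1.basis_exists)
  obtain BT where BT: "BT \<subseteq> T" "vs2.independent BT" "T \<subseteq> vs2.span BT" "card BT = vs2.dim T"
    by (rule vs2.basis_exists)
  define BP where "BP = BS \<times> {0} \<union> {0} \<times> BT"
  have span_BP: "p.span BP = S \<times> T"
    using BS BT S(1) T(1) by (simp add: BP_def span_Times_sing_Un vs1.span_subspace vs2.span_subspace)
  show ?thesis
  proof (rule p.dim_unique)
    show "BP \<subseteq> S \<times> T"
      using span_BP p.span_superset by blast
    show "S \<times> T \<subseteq> p.span BP"
      using span_BP by simp
    show "p.independent BP"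
      unfolding BP_def using BS(2) BT(2) by (rule independent_Times_sing_Un)
    have "finite BS" "finite BT"
      using vs1.independent_card_le_dim_finite_dim [OF S(2) BS(2,1)]
        vs2.independent_card_le_dim_finite_dim [OF T(2) BT(2,1)] by blast+
    moreover have "BS \<times> {0} \<inter> {0} \<times> BT = {}"
      using BS(2) vs1.dependent_zero by blast
    ultimately show "card BP = vs1.dim S + vs2.dim T"
      by (simp add: BP_def card_Un_disjoint card_cartesian_product BS(4) BT(4))
  qed
qed

end

text \<open>The linear data of a filtration, which is all that \<open>h_alg\<close> depends on.\<close>

locale finite_dim_exhaustion = vector_space +
  fixes V :: "nat \<Rightarrow> 'b set"
  assumes subspace_V: "subspace (V n)"
    and mono_V: "mono V"
    and exhaustive: "(\<Union>n. V n) = UNIV"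
    and finite_dim_V: "finite_dim scale (V n)"
begin

lemma dim_V_mono: "i \<le> j \<Longrightarrow> dim (V i) \<le> dim (V j)"
  using dim_mono_finite_dim [OF finite_dim_V] mono_V by (simp add: monoD)

lemma V_Suc_eq_if_quot_dim_zero:
  assumes "quot_dim scale V (Suc n) = 0"
  shows "V (Suc n) = V n"
proof -
  have "dim (V (Suc n)) \<le> dim (V n)"
    using assms by (simp add: quot_dim_def)
  moreover have "V n \<subseteq> V (Suc n)"
    using mono_V by (simp add: mono_iff_le_Suc)
  ultimately have "V n = V (Suc n)"
    by (intro subspace_dim_equal_finite_dim subspace_V finite_dim_V)
  then show ?thesis
    by simp
qed

lemma quot_dim_eventually_zero:
  assumes "fin_dim_space scale"
  shows "eventually (\<lambda>n. quot_dim scale V n = 0) sequentially"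
proof -
  obtain B where B: "finite B" "span B = UNIV"
    using assms fin_dim_space_def by blast
  have "eventually (\<lambda>n. b \<in> V n) sequentially" for b
  proof -
    obtain k where "b \<in> V k"
      using exhaustive by blast
    then show ?thesis
      unfolding eventually_sequentially using monoD [OF mono_V] by blast
  qed
  then have "eventually (\<lambda>n. \<forall>b\<in>B. b \<in> V n) sequentially"
    using B(1) by (intro eventually_ball_finite) auto
  then obtain N where "B \<subseteq> V N"
    by (auto simp: eventually_sequentially)
  then have "V N = UNIV"
    using span_minimal [OF _ subspace_V] B(2) by blast
  then have "V n = UNIV" if "n \<ge> N" for n
    using monoD [OF mono_V that] by blast
  then show ?thesis
    unfolding eventually_sequentially quot_dim_def by (intro exI [of _ "Suc N"]) simp
qed

lemma quot_dim_frequently_nonzero: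
  assumes "\<not> fin_dim_space scale"
  shows "frequently (\<lambda>n. quot_dim scale V n \<noteq> 0) sequentially"
proof (rule ccontr)
  assume "\<not> ?thesis"
  then have "eventually (\<lambda>n. quot_dim scale V n = 0) sequentially"
    by (simp add: not_frequently)
  then obtain N where N: "\<And>n. n \<ge> N \<Longrightarrow> quot_dim scale V n = 0"
    by (auto simp: eventually_sequentially)
  have stable: "V n = V N" if "n \<ge> N" for n
    using that
  proof (induction rule: dec_induct)
    case (step m)
    then show ?case
      using V_Suc_eq_if_quot_dim_zero [OF N [of "Suc m"]] by simp
  qed simp
  have "V n \<subseteq> V N" for n
  proof (cases "n \<le> N")
    case True
    then show ?thesis
      by (rule monoD [OF mono_V])
  next
    case False
    then show ?thesis
      using stable [of n] by simp
  qed
  then have "(\<Union>n. V n) \<subseteq> V N"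
    by (rule UN_least)
  then have "V N = UNIV"
    using exhaustive by blast
  then show False
    using assms finite_dim_V [of N] by (simp add: fin_dim_space_iff_finite_dim_UNIV)
qed

lemma h_alg_eq_max_growth_rate: "h_alg scale V = max 0 (growth_rate (quot_dim scale V))"
proof (cases "fin_dim_space scale")
  case True
  then show ?thesis
    using growth_rate_eq_MInfty [OF quot_dim_eventually_zero] by (simp add: h_alg_eq_growth_rate)
next
  case False
  then show ?thesis
    using growth_rate_nonneg [OF quot_dim_frequently_nonzero] by (simp add: h_alg_eq_growth_rate)
qed

end

lemma is_filtrationD:
  assumes "is_filtration s m V"
  shows "V 0 = {0}" and "module.subspace s (V n)" and "mono V" and "(\<Union>n. V n) = UNIV"
    and "\<exists>B. finite B \<and> V (Suc n) \<subseteq> module.span s (B \<union> V n)"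
  using assms by (simp_all add: is_filtration_def mono_iff_le_Suc)

lemma finite_dim_exhaustion_if_filtration:
  assumes "vector_space s" "is_filtration s m V"
  shows "finite_dim_exhaustion s V"
proof -
  interpret vector_space s
    by (fact assms(1))
  have "finite_dim s (V n)" for n
  proof (induction n)
    case 0
    have "V 0 \<subseteq> span {}"
      by (simp add: is_filtrationD(1) [OF assms(2)])
    then show ?case
      unfolding finite_dim_def by blast
  next
    case (Suc n)
    then obtain F where F: "finite F" "V n \<subseteq> span F"
      by (auto simp: finite_dim_def)
    obtain B where B: "finite B" "V (Suc n) \<subseteq> span (B \<union> V n)"
      using is_filtrationD(5) [OF assms(2)] by blast
    have "span (B \<union> V n) \<subseteq> span (B \<union> F)"
    proof (rule span_minimal)
      show "B \<union> V n \<subseteq> span (B \<union> F)"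
        using F(2) span_superset [of "B \<union> F"] span_mono [of F "B \<union> F"] by blast
    qed (rule subspace_span)
    with B(2) have "V (Suc n) \<subseteq> span (B \<union> F)"
      by blast
    moreover have "finite (B \<union> F)"
      using B(1) F(1) by simp
    ultimately show ?case
      unfolding finite_dim_def by blast
  qed
  then show ?thesis
    using is_filtrationD [OF assms(2)] by unfold_locales
qed

context vector_space_prod
begin

lemma finite_dim_exhaustion_Times:
  assumes "finite_dim_exhaustion s1 V" "finite_dim_exhaustion s2 W"
  shows "finite_dim_exhaustion scale (\<lambda>n. V n \<times> W n)"
proof unfold_locales
  interpret V: finite_dim_exhaustion s1 V by (fact assms(1))
  interpret W: finite_dim_exhaustion s2 W by (fact assms(2))
  show "p.subspace (V n \<times> W n)" for n
    by (intro subspace_Times V.subspace_V W.subspace_V)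
  show "finite_dim scale (V n \<times> W n)" for n
    by (intro finite_dim_Times V.finite_dim_V W.finite_dim_V)
  show "mono (\<lambda>n. V n \<times> W n)"
  proof (rule monoI)
    fix i j :: nat
    assume "i \<le> j"
    then show "V i \<times> W i \<subseteq> V j \<times> W j"
      using monoD [OF V.mono_V] monoD [OF W.mono_V] by blast
  qed
  have "x \<in> (\<Union>n. V n \<times> W n)" for x
  proof -
    obtain i j where "fst x \<in> V i" "snd x \<in> W j"
      using V.exhaustive W.exhaustive by blast
    then have "x \<in> V (max i j) \<times> W (max i j)"
      using monoD [OF V.mono_V, of i "max i j"] monoD [OF W.mono_V, of j "max i j"]
      by (auto simp: mem_Times_iff)
    then show ?thesis
      by blast
  qed
  then show "(\<Union>n. V n \<times> W n) = UNIV"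
    by blast
qed

lemma quot_dim_Times:
  assumes "finite_dim_exhaustion s1 V" "finite_dim_exhaustion s2 W"
  shows "quot_dim scale (\<lambda>n. V n \<times> W n) = (\<lambda>n. quot_dim s1 V n + quot_dim s2 W n)"
proof -
  interpret V: finite_dim_exhaustion s1 V by (fact assms(1))
  interpret W: finite_dim_exhaustion s2 W by (fact assms(2))
  have "quot_dim scale (\<lambda>n. V n \<times> W n) n = quot_dim s1 V n + quot_dim s2 W n" for n
    using V.dim_V_mono [of "n - 1" n] W.dim_V_mono [of "n - 1" n]
    by (simp add: quot_dim_def dim_Times_finite_dim V.subspace_V V.finite_dim_V
        W.subspace_V W.finite_dim_V)
  then show ?thesis
    by (simp add: fun_eq_iff)
qed

end

theorem proposition4p7:
  fixes sA :: "'k::field \<Rightarrow> 'a::ab_group_add \<Rightarrow> 'a" and mA :: "'a \<Rightarrow> 'a \<Rightarrow> 'a"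
    and sB :: "'k \<Rightarrow> 'b::ab_group_add \<Rightarrow> 'b" and mB :: "'b \<Rightarrow> 'b \<Rightarrow> 'b"
    and V :: "nat \<Rightarrow> 'a set" and W :: "nat \<Rightarrow> 'b set"
  assumes "K_algebra sA mA" and "K_algebra sB mB"
    and "is_filtration sA mA V" and "is_filtration sB mB W"
  shows "h_alg (prod_scale sA sB) (\<lambda>n. V n \<times> W n) = max (h_alg sA V) (h_alg sB W)"
proof -
  have "vector_space sA" "vector_space sB"
    using assms(1,2) by (simp_all add: K_algebra_def)
  then interpret P: vector_space_prod sA sB
    by (simp add: vector_space_prod_def vector_space_pair_def)
  have scale: "P.scale = prod_scale sA sB"
    by (simp add: fun_eq_iff P.scale_def prod_scale_def)
  have V: "finite_dim_exhaustion sA V" and W: "finite_dim_exhaustion sB W"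
    using \<open>vector_space sA\<close> \<open>vector_space sB\<close> assms(3,4)
    by (simp_all add: finite_dim_exhaustion_if_filtration)
  have "h_alg (prod_scale sA sB) (\<lambda>n. V n \<times> W n)
      = max 0 (growth_rate (\<lambda>n. quot_dim sA V n + quot_dim sB W n))"
    using finite_dim_exhaustion.h_alg_eq_max_growth_rate [OF P.finite_dim_exhaustion_Times [OF V W]]
    by (simp add: scale [symmetric] P.quot_dim_Times [OF V W])
  also have "\<dots> = max (max 0 (growth_rate (quot_dim sA V))) (max 0 (growth_rate (quot_dim sB W)))"
    by (simp add: growth_rate_add max.left_commute max.commute)
  also have "\<dots> = max (h_alg sA V) (h_alg sB W)"
    by (simp add: finite_dim_exhaustion.h_alg_eq_max_growth_rate [OF V]
        finite_dim_exhaustion.h_alg_eq_max_growth_rate [OF W])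
  finally show ?thesis .
qed

end
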